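(* Let $n$ be a positive integer and let $G$ be a symmetric pure $(2n)$-sparse gapset of genus $3n+1$ with multiplicity $m$. Then $m+1\in G$.
   Context: A gapset is a finite set $G\subset\mathbb{N}=\{1,2,\dots\}$ such that whenever $z\in G$ and $z=x+y$ with $x,y\in\mathbb{N}$, then $x\in G$ or $y\in G$; its genus is $g=\#G$. Writing $G=\{\ell_1<\dots<\ell_g\}$, multiplicity $m(G)=\min\{s\in\mathbb{N}:s\notin G\}$, Frobenius number $F(G)=\ell_g$; $G$ is symmetric if $F(G)=2g-1$. $G$ is pure $\kappa$-sparse if $\ell_{i+1}-\ell_i\le\kappa$ for all $i$ with equality for some $i$. *)

theory Defs
  imports Main
begin

definition gapset :: "nat set \<Rightarrow> bool" where
  "gapset G \<longleftrightarrow> finite G \<and> 0 \<notin> G \<and>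
     (\<forall>z\<in>G. \<forall>x y. x \<ge> 1 \<and> y \<ge> 1 \<and> z = x + y \<longrightarrow> x \<in> G \<or> y \<in> G)"

definition genus :: "nat set \<Rightarrow> nat" where
  "genus G = card G"

definition multiplicity_gs :: "nat set \<Rightarrow> nat" where
  "multiplicity_gs G = (LEAST s. s \<ge> 1 \<and> s \<notin> G)"

text \<open>Frobenius number: largest element of G (the gap set is assumed nonempty when used).\<close>
definition frobenius :: "nat set \<Rightarrow> nat" where
  "frobenius G = Max G"

definition symmetric_gs :: "nat set \<Rightarrow> bool" where
  "symmetric_gs G \<longleftrightarrow> frobenius G = 2 * genus G - 1"

definition pure_sparse :: "nat \<Rightarrow> nat set \<Rightarrow> bool" where
  "pure_sparse \<kappa> G \<longleftrightarrow>
     (let l = sorted_list_of_set G in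
        (\<forall>i. i + 1 < length l \<longrightarrow> l ! (i + 1) - l ! i \<le> \<kappa>) \<and>
        (\<exists>i. i + 1 < length l \<and> l ! (i + 1) - l ! i = \<kappa>))"

end

theory Submission
  imports Defs
begin

text \<open>
  Write \<open>F = 6n + 1\<close> for the Frobenius number and \<open>m\<close> for the multiplicity. Since \<open>G\<close> is
  symmetric, \<open>x \<mapsto> F - x\<close> maps the non-gaps in \<open>[0, F]\<close> bijectively onto \<open>G\<close>, so
  \<open>F - y \<notin> G\<close> for every gap \<open>y\<close>. For \<open>y\<close> the second largest gap, \<open>F - y \<le> 2n\<close> is a
  non-gap, whence \<open>m \<le> 2n\<close>. Conversely, the \<open>2n - 1\<close> non-gaps strictly between two
  consecutive gaps at distance \<open>2n\<close> reflect to \<open>2n - 1\<close> consecutive gaps; as no multiple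
  of \<open>m\<close> is a gap, \<open>m \<ge> 2n\<close>. Hence \<open>F = 2m + (m + 1)\<close> with \<open>2m \<notin> G\<close>, and the gapset
  property forces \<open>m + 1 \<in> G\<close>.
\<close>

lemma gapset_split:
  assumes "gapset G" "x + y \<in> G" "x \<ge> 1" "y \<ge> 1"
  shows "x \<in> G \<or> y \<in> G"
  using assms unfolding gapset_def by blast

lemma gapset_mult_notin:
  assumes "gapset G" "m \<notin> G"
  shows "k * m \<notin> G"
proof (induction k)
  case 0
  show ?case using \<open>gapset G\<close> by (simp add: gapset_def)
next
  case (Suc k)
  show ?case
  proof
    assume mult: "Suc k * m \<in> G"
    have "m \<noteq> 0" using mult \<open>gapset G\<close> by (metis gapset_def mult_0_right)
    moreover have "k \<noteq> 0" using mult \<open>m \<notin> G\<close> by (cases k) auto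
    ultimately have "m \<in> G \<or> k * m \<in> G"
      using gapset_split[OF \<open>gapset G\<close>, of m "k * m"] mult by simp
    then show False using \<open>m \<notin> G\<close> Suc.IH by blast
  qed
qed

lemma gapset_interval_not_subset:
  assumes "gapset G" "m \<notin> G" "m \<ge> 1" "c \<ge> 1"
  shows "\<not> {c..<c + m} \<subseteq> G"
proof
  assume run: "{c..<c + m} \<subseteq> G"
  define x where "x = c + m - 1"
  have "x div m * m + x mod m = x" by (rule div_mult_mod_eq)
  moreover have "x mod m < m" using \<open>m \<ge> 1\<close> by simp
  moreover have "x + 1 = c + m" using \<open>m \<ge> 1\<close> unfolding x_def by simp
  ultimately have "x div m * m \<in> {c..<c + m}"
    unfolding atLeastLessThan_iff by linarith
  then show False using run gapset_mult_notin[OF assms(1,2)] by blast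
qed

lemma multiplicity_gs_le: "s \<ge> 1 \<Longrightarrow> s \<notin> G \<Longrightarrow> multiplicity_gs G \<le> s"
  unfolding multiplicity_gs_def by (simp add: Least_le)

lemma multiplicity_gs_pos_notin:
  assumes "finite G"
  shows "multiplicity_gs G \<ge> 1 \<and> multiplicity_gs G \<notin> G"
proof -
  have "x \<le> Max (insert 0 G)" if "x \<in> G" for x using assms that by simp
  then have "Suc (Max (insert 0 G)) \<notin> G" by (meson Suc_n_not_le_n)
  then have "1 \<le> Suc (Max (insert 0 G)) \<and> Suc (Max (insert 0 G)) \<notin> G" by simp
  then show ?thesis unfolding multiplicity_gs_def by (rule LeastI)
qed

definition consecutive_in :: "nat set \<Rightarrow> nat \<Rightarrow> nat \<Rightarrow> bool" where
  "consecutive_in G a b \<longleftrightarrow> a \<in> G \<and> b \<in> G \<and> a < b \<and> (\<forall>x. a < x \<and> x < b \<longrightarrow> x \<notin> G)"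

lemma strict_sorted_nth_less_iff:
  assumes "sorted_wrt (<) xs" "i < length xs" "j < length xs"
  shows "xs ! i < (xs ! j :: 'a :: linorder) \<longleftrightarrow> i < j"
  using assms by (metis linorder_neq_iff order_less_asym sorted_wrt_nth_less)

lemma consecutive_in_iff_sorted_list_of_set:
  assumes "finite G"
  defines "l \<equiv> sorted_list_of_set G"
  shows "consecutive_in G a b \<longleftrightarrow> (\<exists>i. i + 1 < length l \<and> l ! i = a \<and> l ! (i + 1) = b)"
proof -
  have set_l: "set l = G" and sorted_l: "sorted_wrt (<) l"
    using assms by auto
  note less_iff = strict_sorted_nth_less_iff[OF sorted_l]
  have index: "\<exists>i < length l. l ! i = x" if "x \<in> G" for x
    using that set_l by (auto simp: in_set_conv_nth)
  show ?thesis
  proof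
    assume cons: "consecutive_in G a b"
    then obtain i j where ij: "i < length l" "l ! i = a" "j < length l" "l ! j = b"
      unfolding consecutive_in_def using index by meson
    have "i < j"
      using cons less_iff[OF ij(1,3)] ij(2,4) by (simp add: consecutive_in_def)
    moreover have "\<not> i + 1 < j"
    proof
      assume lt: "i + 1 < j"
      then have "l ! (i + 1) \<in> G" using ij(3) set_l by auto
      moreover have "a < l ! (i + 1)" using less_iff[OF ij(1), of "i + 1"] lt ij by simp
      moreover have "l ! (i + 1) < b" using less_iff[OF _ ij(3), of "i + 1"] lt ij by simp
      ultimately show False using cons by (auto simp: consecutive_in_def)
    qed
    ultimately have "j = i + 1" by simp
    then show "\<exists>i. i + 1 < length l \<and> l ! i = a \<and> l ! (i + 1) = b"
      using ij by blast
  next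
    assume "\<exists>i. i + 1 < length l \<and> l ! i = a \<and> l ! (i + 1) = b"
    then obtain i where i: "i + 1 < length l" "l ! i = a" "l ! (i + 1) = b" by blast
    have "x \<notin> G" if "a < x" "x < b" for x
    proof
      assume "x \<in> G"
      then obtain j where j: "j < length l" "l ! j = x" using index by blast
      have "i < j" using less_iff[of i j] i j that by simp
      moreover have "j < i + 1" using less_iff[of j "i + 1"] i j that by simp
      ultimately show False by simp
    qed
    moreover have "a < b" using less_iff[of i "i + 1"] i by simp
    ultimately show "consecutive_in G a b"
      using i set_l nth_mem[of i l] nth_mem[of "i + 1" l] unfolding consecutive_in_def by simp
  qed
qed

lemma pure_sparse_iff_consecutive_in:
  assumes "finite G"
  shows "pure_sparse \<kappa> G \<longleftrightarrow>
    (\<forall>a b. consecutive_in G a b \<longrightarrow> b - a \<le> \<kappa>) \<and> (\<exists>a b. consecutive_in G a b \<and> b - a = \<kappa>)"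
  unfolding pure_sparse_def Let_def consecutive_in_iff_sorted_list_of_set[OF assms]
  by blast

lemma symmetric_gapset_reflect_notin:
  assumes "gapset G" "symmetric_gs G" "G \<noteq> {}" "y \<in> G"
  shows "frobenius G - y \<notin> G"
proof -
  define F where "F = frobenius G"
  have fin: "finite G" using \<open>gapset G\<close> by (simp add: gapset_def)
  have F_in: "F \<in> G" and le_F: "\<And>x. x \<in> G \<Longrightarrow> x \<le> F"
    using fin \<open>G \<noteq> {}\<close> by (simp_all add: F_def frobenius_def)
  define A where "A = {0..F} - G"
  have "G \<subseteq> {0..F}" using le_F by auto
  then have "card A = F + 1 - card G" using card_Diff_subset[OF fin] by (simp add: A_def)
  moreover have "card G \<ge> 1" using fin \<open>G \<noteq> {}\<close> by (simp add: Suc_le_eq card_gt_0_iff)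
  ultimately have card_A: "card A = card G"
    using \<open>symmetric_gs G\<close> by (simp add: F_def symmetric_gs_def genus_def)
  have reflect_A: "(\<lambda>x. F - x) ` A \<subseteq> G"
  proof
    fix w assume "w \<in> (\<lambda>x. F - x) ` A"
    then obtain x where x: "x \<in> A" "w = F - x" by auto
    show "w \<in> G"
    proof (cases "x = 0")
      case True
      then show ?thesis using x F_in by simp
    next
      case False
      have "x < F" using x F_in by (auto simp: A_def order_le_less)
      then have "x \<in> G \<or> F - x \<in> G"
        using gapset_split[OF \<open>gapset G\<close>, of x "F - x"] F_in False by simp
      then show ?thesis using x by (simp add: A_def)
    qed
  qed
  have "inj_on (\<lambda>x. F - x) A" by (auto simp: A_def inj_on_def)
  then have "(\<lambda>x. F - x) ` A = G"
    using card_subset_eq[OF fin reflect_A] card_image card_A by metis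
  then obtain x where "x \<in> A" "y = F - x" using \<open>y \<in> G\<close> by auto
  then show ?thesis by (auto simp: A_def F_def)
qed

lemma symmetric_pure_sparse_multiplicity_le:
  assumes "gapset G" "symmetric_gs G" "pure_sparse \<kappa> G"
  shows "multiplicity_gs G \<le> \<kappa>"
proof -
  define F where "F = frobenius G"
  have fin: "finite G" using \<open>gapset G\<close> by (simp add: gapset_def)
  obtain a b where "consecutive_in G a b"
    using \<open>pure_sparse \<kappa> G\<close> pure_sparse_iff_consecutive_in[OF fin] by blast
  then have "a \<in> G - {F}" "G \<noteq> {}"
    using fin by (auto simp: consecutive_in_def F_def frobenius_def dest: Max_ge[of G b])
  define p where "p = Max (G - {F})"
  have F_in: "F \<in> G" and le_F: "\<And>x. x \<in> G \<Longrightarrow> x \<le> F"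
    using fin \<open>G \<noteq> {}\<close> by (simp_all add: F_def frobenius_def)
  have "G - {F} \<noteq> {}" using \<open>a \<in> G - {F}\<close> by blast
  then have "p \<in> G - {F}" unfolding p_def using fin by (intro Max_in) auto
  have le_p: "\<And>x. x \<in> G - {F} \<Longrightarrow> x \<le> p" using fin by (simp add: p_def)
  have "consecutive_in G p F"
    using \<open>p \<in> G - {F}\<close> le_p le_F F_in unfolding consecutive_in_def by (fastforce simp: order_le_less)
  then have "F - p \<le> \<kappa>"
    using \<open>pure_sparse \<kappa> G\<close> pure_sparse_iff_consecutive_in[OF fin] by blast
  moreover have "F - p \<notin> G"
    using symmetric_gapset_reflect_notin[OF assms(1,2) \<open>G \<noteq> {}\<close>] \<open>p \<in> G - {F}\<close> by (simp add: F_def)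
  moreover have "F - p \<ge> 1" using \<open>consecutive_in G p F\<close> by (auto simp: consecutive_in_def)
  ultimately show ?thesis using multiplicity_gs_le[of "F - p" G] by simp
qed

lemma pure_sparse_le_multiplicity:
  assumes "gapset G" "pure_sparse \<kappa> G"
  shows "\<kappa> \<le> multiplicity_gs G"
proof (rule ccontr)
  assume "\<not> \<kappa> \<le> multiplicity_gs G"
  define m where "m = multiplicity_gs G"
  define F where "F = frobenius G"
  have fin: "finite G" using \<open>gapset G\<close> by (simp add: gapset_def)
  have m: "m \<ge> 1" "m \<notin> G" using multiplicity_gs_pos_notin[OF fin] by (simp_all add: m_def)
  obtain a b where ab: "consecutive_in G a b" "b - a = \<kappa>"
    using \<open>pure_sparse \<kappa> G\<close> pure_sparse_iff_consecutive_in[OF fin] by blast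
  then have "G \<noteq> {}" by (auto simp: consecutive_in_def)
  with ab have "a \<ge> 1" "b \<le> F" "F \<in> G"
    using fin \<open>gapset G\<close> by (auto simp: consecutive_in_def gapset_def F_def frobenius_def intro: Suc_leI)
  have "{F - b + 1..<F - b + 1 + m} \<subseteq> G"
  proof
    fix t assume t: "t \<in> {F - b + 1..<F - b + 1 + m}"
    then have "a < F - t" "F - t < b"
      using \<open>b \<le> F\<close> \<open>a \<ge> 1\<close> ab \<open>\<not> \<kappa> \<le> multiplicity_gs G\<close> by (auto simp: m_def consecutive_in_def)
    then have "F - t \<notin> G" and "F - t + t \<in> G" and "t \<ge> 1"
      using ab(1) \<open>F \<in> G\<close> t by (auto simp: consecutive_in_def)
    then show "t \<in> G" using gapset_split[OF \<open>gapset G\<close>, of "F - t" t] \<open>a < F - t\<close> by auto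
  qed
  then show False using gapset_interval_not_subset[OF \<open>gapset G\<close> m(2,1), of "F - b + 1"] by simp
qed

theorem mainTheorem10:
  fixes n :: nat and G :: "nat set"
  assumes "n \<ge> 1"
    and "gapset G"
    and "symmetric_gs G"
    and "pure_sparse (2 * n) G"
    and "genus G = 3 * n + 1"
  shows "multiplicity_gs G + 1 \<in> G"
proof -
  define m where "m = multiplicity_gs G"
  have fin: "finite G" using \<open>gapset G\<close> by (simp add: gapset_def)
  have "m = 2 * n"
    using symmetric_pure_sparse_multiplicity_le[OF assms(2-4)] pure_sparse_le_multiplicity[OF assms(2,4)]
    by (simp add: m_def)
  have "G \<noteq> {}" using \<open>genus G = 3 * n + 1\<close> by (auto simp: genus_def)
  then have "frobenius G \<in> G" using fin by (simp add: frobenius_def)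
  moreover have "frobenius G = 2 * m + (m + 1)"
    using \<open>symmetric_gs G\<close> \<open>genus G = 3 * n + 1\<close> \<open>m = 2 * n\<close> by (simp add: symmetric_gs_def)
  moreover have "2 * m \<notin> G"
    using gapset_mult_notin[OF \<open>gapset G\<close>] multiplicity_gs_pos_notin[OF fin] by (simp add: m_def)
  ultimately show ?thesis
    using gapset_split[OF \<open>gapset G\<close>, of "2 * m" "m + 1"] \<open>n \<ge> 1\<close> \<open>m = 2 * n\<close> by (simp add: m_def)
qed

end
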